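(* Let $\mathbf{E}\subseteq\mathbf{A}$ be finite symmetric integral relation algebras. Then the map $a\mapsto J(a,0)$ is an isomorphism from $\mathbf{A}$ onto a subalgebra $\mathbf{A}'$ of $\mathbf{C}_{\mathbf{E}}(\mathbf{A})$.
   Context: Relation algebras are in the sense of Tarski; $1'$ identity, $0'$ its complement, $;$ relative product; integral: $1'$ is an atom; symmetric: $x^{\smile}=x$; a diversity atom is an atom below $0'$. The algebra $\mathbf{C}_{\mathbf{E}}(\mathbf{A})$: for each atom $x$ of $\mathbf{A}$ let $c(x)$ be the atom of $\mathbf{E}$ with $x\le c(x)$. Let $T(i,j,k)$, for $i,j,k\in\omega$, hold iff $(i\le j=k)$ or $(j\le k=i)$ or $(k\le i=j)$. Let $At=\{1'\}\cup\{x^{(i)}:x$ a diversity atom of $\mathbf{A}$, $i\in\omega\}$ (distinct formal symbols). Let $C\subseteq At^3$ consist of all permutations of $(1',1',1')$, $(1',x^{(i)},x^{(i)})$, and $(x^{(i)},y^{(j)},z^{(k)})$ where $x,y,z$ are diversity atoms of $\mathbf{A}$ with $x;y\ge z$ in $\mathbf{A}$ and, if $c(x)=c(y)=c(z)$, then $T(i,j,k)$. $\mathbf{C}_{\mathbf{E}}(\mathbf{A})$ is the algebra of all subsets of $At$ with set-theoretic Boolean operations, identity $\{1'\}$, converse the identity map, and $X;Y=\{w:\exists u\in X,\exists v\in Y,(u,v,w)\in C\}$ (a complete atomic non-associative relation algebra with atoms the elements of $At$). For $a\in\mathbf{A}$ and $n\in\omega$, $J(a,n)$ is the join of all $x^{(i)}$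 with $x$ a diversity atom of $\mathbf{A}$, $x\le a$, $n\le i\in\omega$, together with $1'$ if $1'\le a$. *)

theory Defs
  imports Main
begin

record 'a ra =
  carrier :: "'a set"
  join    :: "'a \<Rightarrow> 'a \<Rightarrow> 'a"
  meet    :: "'a \<Rightarrow> 'a \<Rightarrow> 'a"
  compl   :: "'a \<Rightarrow> 'a"
  bot     :: 'a
  top     :: 'a
  comp    :: "'a \<Rightarrow> 'a \<Rightarrow> 'a"
  conv    :: "'a \<Rightarrow> 'a"
  ident   :: 'a

definition le :: "'a ra \<Rightarrow> 'a \<Rightarrow> 'a \<Rightarrow> bool" where
  "le A x y \<longleftrightarrow> join A x y = y"

definition is_ra :: "'a ra \<Rightarrow> bool" where
  "is_ra A \<longleftrightarrow>
     bot A \<in> carrier A \<and> top A \<in> carrier A \<and> ident A \<in> carrier A \<and>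
     (\<forall>x\<in>carrier A. compl A x \<in> carrier A \<and> conv A x \<in> carrier A) \<and>
     (\<forall>x\<in>carrier A. \<forall>y\<in>carrier A.
        join A x y \<in> carrier A \<and> meet A x y \<in> carrier A \<and> comp A x y \<in> carrier A) \<and>
     \<comment> \<open>Boolean algebra axioms\<close>
     (\<forall>x\<in>carrier A. \<forall>y\<in>carrier A.
        join A x y = join A y x \<and> meet A x y = meet A y x \<and>
        join A x (meet A x y) = x \<and> meet A x (join A x y) = x) \<and>
     (\<forall>x\<in>carrier A. \<forall>y\<in>carrier A. \<forall>z\<in>carrier A.
        join A (join A x y) z = join A x (join A y z) \<and>
        meet A (meet A x y) z = meet A x (meet A y z) \<and>
        meet A x (join A y z) = join A (meet A x y) (meet A x z)) \<and>
     (\<forall>x\<in>carrier A. join A x (bot A) = x \<and> meet A x (top A) = x \<and>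
        join A x (compl A x) = top A \<and> meet A x (compl A x) = bot A) \<and>
     \<comment> \<open>relation algebra axioms\<close>
     (\<forall>x\<in>carrier A. \<forall>y\<in>carrier A. \<forall>z\<in>carrier A.
        comp A (comp A x y) z = comp A x (comp A y z) \<and>
        comp A (join A x y) z = join A (comp A x z) (comp A y z)) \<and>
     (\<forall>x\<in>carrier A. comp A x (ident A) = x \<and> conv A (conv A x) = x) \<and>
     (\<forall>x\<in>carrier A. \<forall>y\<in>carrier A.
        conv A (join A x y) = join A (conv A x) (conv A y) \<and>
        conv A (comp A x y) = comp A (conv A y) (conv A x) \<and>
        join A (comp A (conv A x) (compl A (comp A x y))) (compl A y) = compl A y)"

definition atom :: "'a ra \<Rightarrow> 'a \<Rightarrow> bool" where
  "atom A x \<longleftrightarrow> x \<in> carrier A \<and> x \<noteq> bot A \<and>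
     (\<forall>y\<in>carrier A. le A y x \<longrightarrow> y = bot A \<or> y = x)"

definition div_atom :: "'a ra \<Rightarrow> 'a \<Rightarrow> bool" where
  "div_atom A x \<longleftrightarrow> atom A x \<and> le A x (compl A (ident A))"

definition integral :: "'a ra \<Rightarrow> bool" where
  "integral A \<longleftrightarrow> atom A (ident A)"

definition symmetric :: "'a ra \<Rightarrow> bool" where
  "symmetric A \<longleftrightarrow> (\<forall>x\<in>carrier A. conv A x = x)"

definition subalg :: "'a ra \<Rightarrow> 'a ra \<Rightarrow> bool" where
  "subalg S B \<longleftrightarrow> carrier S \<subseteq> carrier B \<and>
     bot S = bot B \<and> top S = top B \<and> ident S = ident B \<and>
     bot S \<in> carrier S \<and> top S \<in> carrier S \<and> ident S \<in> carrier S \<and>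
     (\<forall>x\<in>carrier S. compl S x = compl B x \<and> conv S x = conv B x \<and>
        compl S x \<in> carrier S \<and> conv S x \<in> carrier S) \<and>
     (\<forall>x\<in>carrier S. \<forall>y\<in>carrier S.
        join S x y = join B x y \<and> meet S x y = meet B x y \<and> comp S x y = comp B x y \<and>
        join S x y \<in> carrier S \<and> meet S x y \<in> carrier S \<and> comp S x y \<in> carrier S)"

definition ra_hom :: "('a \<Rightarrow> 'b) \<Rightarrow> 'a ra \<Rightarrow> 'b ra \<Rightarrow> bool" where
  "ra_hom f A B \<longleftrightarrow> f ` carrier A \<subseteq> carrier B \<and>
     f (bot A) = bot B \<and> f (top A) = top B \<and> f (ident A) = ident B \<and>
     (\<forall>x\<in>carrier A. f (compl A x) = compl B (f x) \<and> f (conv A x) = conv B (f x)) \<and>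
     (\<forall>x\<in>carrier A. \<forall>y\<in>carrier A.
        f (join A x y) = join B (f x) (f y) \<and> f (meet A x y) = meet B (f x) (f y) \<and>
        f (comp A x y) = comp B (f x) (f y))"

definition ra_iso :: "('a \<Rightarrow> 'b) \<Rightarrow> 'a ra \<Rightarrow> 'b ra \<Rightarrow> bool" where
  "ra_iso f A B \<longleftrightarrow> ra_hom f A B \<and> bij_betw f (carrier A) (carrier B)"

text \<open>Atoms: None stands for 1', Some (x, i) for x^(i).\<close>

definition catom :: "'a ra \<Rightarrow> 'a ra \<Rightarrow> 'a \<Rightarrow> 'a" where
  "catom E A x = (THE e. atom E e \<and> le A x e)"

definition T :: "nat \<Rightarrow> nat \<Rightarrow> nat \<Rightarrow> bool" where
  "T i j k \<longleftrightarrow> (i \<le> j \<and> j = k) \<or> (j \<le> k \<and> k = i) \<or> (k \<le> i \<and> i = j)"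

definition At :: "'a ra \<Rightarrow> ('a \<times> nat) option set" where
  "At A = {None} \<union> {Some (x, i) | x i. div_atom A x}"

fun base_triple :: "'a ra \<Rightarrow> 'a ra \<Rightarrow> ('a \<times> nat) option \<Rightarrow> ('a \<times> nat) option
    \<Rightarrow> ('a \<times> nat) option \<Rightarrow> bool" where
  "base_triple E A None None None = True"
| "base_triple E A None (Some p) (Some q) = (p = q)"
| "base_triple E A (Some (x, i)) (Some (y, j)) (Some (z, k)) =
     (div_atom A x \<and> div_atom A y \<and> div_atom A z \<and> le A z (comp A x y) \<and>
      (catom E A x = catom E A y \<and> catom E A y = catom E A z \<longrightarrow> T i j k))"
| "base_triple E A _ _ _ = False"

definition Ctr :: "'a ra \<Rightarrow> 'a ra \<Rightarrow> ('a \<times> nat) option \<Rightarrow> ('a \<times> nat) option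
    \<Rightarrow> ('a \<times> nat) option \<Rightarrow> bool" where
  "Ctr E A u v w \<longleftrightarrow> u \<in> At A \<and> v \<in> At A \<and> w \<in> At A \<and>
     (base_triple E A u v w \<or> base_triple E A u w v \<or> base_triple E A v u w \<or>
      base_triple E A v w u \<or> base_triple E A w u v \<or> base_triple E A w v u)"

definition CEA :: "'a ra \<Rightarrow> 'a ra \<Rightarrow> ('a \<times> nat) option set ra" where
  "CEA E A = \<lparr> carrier = Pow (At A), join = (\<union>), meet = (\<inter>),
     compl = (\<lambda>X. At A - X), bot = {}, top = At A,
     comp = (\<lambda>X Y. {w. \<exists>u\<in>X. \<exists>v\<in>Y. Ctr E A u v w}),
     conv = (\<lambda>X. X), ident = {None} \<rparr>"

definition J :: "'a ra \<Rightarrow> 'a \<Rightarrow> nat \<Rightarrow> ('a \<times> nat) option set" where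
  "J A a n = {Some (x, i) | x i. div_atom A x \<and> le A x a \<and> n \<le> i}
             \<union> (if le A (ident A) a then {None} else {})"

end

theory Submission imports Defs begin

text \<open>An atom of C_E(A) is a copy x^(i) of an atom x of A, and J(a,0) collects the copies
  of the atoms below a. A finite algebra is atomic, so a \<mapsto> J(a,0) is an injective Boolean
  homomorphism. For composition, the inclusion of J(a;b,0) in J(a,0);J(b,0) is the real point:
  if z \<le> a;b for an atom z, the Peircean law of the symmetric algebra A (consistent triangles
  may be permuted) yields atoms x \<le> a and y \<le> b with z \<le> x;y, and the triple
  (x^(k), y^(k), z^(k)) of copies with equal index is a cycle of C_E(A) because T(k,k,k) holds.\<close>

locale rel_alg =
  fixes A :: "'a ra"
  assumes is_ra: "is_ra A"
begin

lemma bot_closed: "bot A \<in> carrier A"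
  and top_closed: "top A \<in> carrier A"
  and ident_closed: "ident A \<in> carrier A"
  and compl_closed: "x \<in> carrier A \<Longrightarrow> compl A x \<in> carrier A"
  and conv_closed: "x \<in> carrier A \<Longrightarrow> conv A x \<in> carrier A"
  and join_closed: "x \<in> carrier A \<Longrightarrow> y \<in> carrier A \<Longrightarrow> join A x y \<in> carrier A"
  and meet_closed: "x \<in> carrier A \<Longrightarrow> y \<in> carrier A \<Longrightarrow> meet A x y \<in> carrier A"
  and comp_closed: "x \<in> carrier A \<Longrightarrow> y \<in> carrier A \<Longrightarrow> comp A x y \<in> carrier A"
  using is_ra unfolding is_ra_def by auto

lemma join_commute: "x \<in> carrier A \<Longrightarrow> y \<in> carrier A \<Longrightarrow> join A x y = join A y x"
  and meet_commute: "x \<in> carrier A \<Longrightarrow> y \<in> carrier A \<Longrightarrow> meet A x y = meet A y x"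
  and join_meet_absorb: "x \<in> carrier A \<Longrightarrow> y \<in> carrier A \<Longrightarrow> join A x (meet A x y) = x"
  and meet_join_absorb: "x \<in> carrier A \<Longrightarrow> y \<in> carrier A \<Longrightarrow> meet A x (join A x y) = x"
  and join_assoc: "x \<in> carrier A \<Longrightarrow> y \<in> carrier A \<Longrightarrow> z \<in> carrier A \<Longrightarrow>
    join A (join A x y) z = join A x (join A y z)"
  and meet_assoc: "x \<in> carrier A \<Longrightarrow> y \<in> carrier A \<Longrightarrow> z \<in> carrier A \<Longrightarrow>
    meet A (meet A x y) z = meet A x (meet A y z)"
  and meet_join_distrib: "x \<in> carrier A \<Longrightarrow> y \<in> carrier A \<Longrightarrow> z \<in> carrier A \<Longrightarrow>
    meet A x (join A y z) = join A (meet A x y) (meet A x z)"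
  and comp_join_distrib: "x \<in> carrier A \<Longrightarrow> y \<in> carrier A \<Longrightarrow> z \<in> carrier A \<Longrightarrow>
    comp A (join A x y) z = join A (comp A x z) (comp A y z)"
  and join_bot: "x \<in> carrier A \<Longrightarrow> join A x (bot A) = x"
  and meet_top: "x \<in> carrier A \<Longrightarrow> meet A x (top A) = x"
  and join_compl: "x \<in> carrier A \<Longrightarrow> join A x (compl A x) = top A"
  and meet_compl: "x \<in> carrier A \<Longrightarrow> meet A x (compl A x) = bot A"
  and comp_ident: "x \<in> carrier A \<Longrightarrow> comp A x (ident A) = x"
  and conv_comp: "x \<in> carrier A \<Longrightarrow> y \<in> carrier A \<Longrightarrow>
    conv A (comp A x y) = comp A (conv A y) (conv A x)"
  and schroeder: "x \<in> carrier A \<Longrightarrow> y \<in> carrier A \<Longrightarrow>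
    join A (comp A (conv A x) (compl A (comp A x y))) (compl A y) = compl A y"
  using is_ra unfolding is_ra_def by auto

lemma meet_idem: "x \<in> carrier A \<Longrightarrow> meet A x x = x"
  using meet_join_absorb[of x "meet A x x"] join_meet_absorb[of x x] meet_closed by simp

lemma le_iff_meet: "x \<in> carrier A \<Longrightarrow> y \<in> carrier A \<Longrightarrow> le A x y \<longleftrightarrow> meet A x y = x"
  unfolding le_def
  by (metis join_commute join_meet_absorb meet_commute meet_join_absorb)

lemma le_refl: "x \<in> carrier A \<Longrightarrow> le A x x"
  by (simp add: le_iff_meet meet_idem)

lemma le_trans: "x \<in> carrier A \<Longrightarrow> y \<in> carrier A \<Longrightarrow> z \<in> carrier A \<Longrightarrow>
    le A x y \<Longrightarrow> le A y z \<Longrightarrow> le A x z"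
  unfolding le_def using join_assoc[of x y z] by simp

lemma le_antisym: "x \<in> carrier A \<Longrightarrow> y \<in> carrier A \<Longrightarrow> le A x y \<Longrightarrow> le A y x \<Longrightarrow> x = y"
  unfolding le_def using join_commute[of x y] by simp

lemma meet_le1: "x \<in> carrier A \<Longrightarrow> y \<in> carrier A \<Longrightarrow> le A (meet A x y) x"
  by (simp add: le_iff_meet meet_closed meet_commute meet_idem flip: meet_assoc)

lemma meet_le2: "x \<in> carrier A \<Longrightarrow> y \<in> carrier A \<Longrightarrow> le A (meet A x y) y"
  using meet_le1[of y x] meet_commute[of x y] by simp

lemma le_meetI: "x \<in> carrier A \<Longrightarrow> y \<in> carrier A \<Longrightarrow> z \<in> carrier A \<Longrightarrow>
    le A z x \<Longrightarrow> le A z y \<Longrightarrow> le A z (meet A x y)"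
  by (simp add: le_iff_meet meet_closed flip: meet_assoc)

lemma join_upper1: "x \<in> carrier A \<Longrightarrow> y \<in> carrier A \<Longrightarrow> le A x (join A x y)"
  by (simp add: le_iff_meet join_closed meet_join_absorb)

lemma join_upper2: "x \<in> carrier A \<Longrightarrow> y \<in> carrier A \<Longrightarrow> le A y (join A x y)"
  using join_upper1[of y x] join_commute[of x y] by simp

lemma le_bot_iff: "x \<in> carrier A \<Longrightarrow> le A x (bot A) \<longleftrightarrow> x = bot A"
  unfolding le_def by (metis join_bot)

lemma top_greatest: "x \<in> carrier A \<Longrightarrow> le A x (top A)"
  by (simp add: le_iff_meet top_closed meet_top)

lemma le_compl_iff_disjoint:
  assumes x: "x \<in> carrier A" and y: "y \<in> carrier A"
  shows "le A x (compl A y) \<longleftrightarrow> meet A x y = bot A"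
proof
  assume "le A x (compl A y)"
  then have "le A (meet A x y) (meet A y (compl A y))"
    using le_trans[OF meet_closed[OF x y] x compl_closed[OF y]] meet_le1[OF x y] meet_le2[OF x y]
    by (simp add: le_meetI meet_closed compl_closed x y)
  then show "meet A x y = bot A"
    by (simp add: meet_compl y le_bot_iff meet_closed x)
next
  assume "meet A x y = bot A"
  then have "meet A x (compl A y) = meet A x (join A y (compl A y))"
    by (simp add: meet_join_distrib compl_closed x y join_commute[OF bot_closed] join_bot meet_closed)
  then show "le A x (compl A y)"
    by (simp add: le_iff_meet x y compl_closed join_compl meet_top)
qed

lemma le_of_meet_compl_eq_bot:
  assumes x: "x \<in> carrier A" and y: "y \<in> carrier A" and xy: "meet A x (compl A y) = bot A"
  shows "le A x y"
proof -
  have "x = meet A x (join A y (compl A y))"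
    by (simp add: join_compl meet_top x y)
  also have "\<dots> = join A (meet A x y) (bot A)"
    by (simp add: meet_join_distrib compl_closed x y xy)
  finally show ?thesis
    by (simp add: join_bot meet_closed x y le_iff_meet)
qed

lemma comp_mono_left: "x \<in> carrier A \<Longrightarrow> y \<in> carrier A \<Longrightarrow> z \<in> carrier A \<Longrightarrow>
    le A x y \<Longrightarrow> le A (comp A x z) (comp A y z)"
  unfolding le_def using comp_join_distrib[of x y z] by simp

lemma atom_carrier: "atom A t \<Longrightarrow> t \<in> carrier A"
  unfolding atom_def by simp

lemma atoms_le_eq: "atom A x \<Longrightarrow> atom A y \<Longrightarrow> le A x y \<Longrightarrow> x = y"
  unfolding atom_def by auto

lemma atom_not_le_bot: "atom A t \<Longrightarrow> \<not> le A t (bot A)"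
  unfolding atom_def by (simp add: le_bot_iff)

lemma atom_meet_bot_or_le: "atom A t \<Longrightarrow> a \<in> carrier A \<Longrightarrow> meet A t a = bot A \<or> le A t a"
  unfolding atom_def by (metis le_iff_meet meet_closed meet_le1)

lemma meet_atom_neq_bot_iff: "atom A t \<Longrightarrow> a \<in> carrier A \<Longrightarrow> meet A a t \<noteq> bot A \<longleftrightarrow> le A t a"
  using atom_meet_bot_or_le[of t a] meet_commute[of a t] le_iff_meet[of t a]
  by (auto simp: atom_def)

lemma atom_le_compl_iff: "atom A t \<Longrightarrow> a \<in> carrier A \<Longrightarrow> le A t (compl A a) \<longleftrightarrow> \<not> le A t a"
  using meet_atom_neq_bot_iff[of t a] le_compl_iff_disjoint[of t a] meet_commute[of a t]
  by (auto simp: atom_carrier)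

lemma atom_le_meet_iff: "atom A t \<Longrightarrow> a \<in> carrier A \<Longrightarrow> b \<in> carrier A \<Longrightarrow>
    le A t (meet A a b) \<longleftrightarrow> le A t a \<and> le A t b"
  by (meson atom_carrier le_meetI le_trans meet_closed meet_le1 meet_le2)

lemma atom_le_join_iff:
  assumes t: "atom A t" and a: "a \<in> carrier A" and b: "b \<in> carrier A"
  shows "le A t (join A a b) \<longleftrightarrow> le A t a \<or> le A t b"
proof
  assume tab: "le A t (join A a b)"
  show "le A t a \<or> le A t b"
  proof (rule disjCI)
    assume "\<not> le A t b"
    then have "meet A t b = bot A"
      using atom_meet_bot_or_le[OF t b] by blast
    moreover have "meet A t (join A a b) = t"
      using tab by (simp add: le_iff_meet atom_carrier[OF t] a b join_closed)
    ultimately have "join A (meet A t a) (bot A) = t"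
      by (simp add: meet_join_distrib atom_carrier[OF t] a b)
    then show "le A t a"
      by (simp add: join_bot meet_closed atom_carrier[OF t] a le_iff_meet)
  qed
next
  show "le A t a \<or> le A t b \<Longrightarrow> le A t (join A a b)"
    by (meson atom_carrier[OF t] a b join_closed join_upper1 join_upper2 le_trans)
qed

definition triangle :: "'a \<Rightarrow> 'a \<Rightarrow> 'a \<Rightarrow> bool" where
  "triangle x y z \<longleftrightarrow> meet A (comp A x y) z \<noteq> bot A"

lemma triangle_atom_iff:
  "atom A z \<Longrightarrow> x \<in> carrier A \<Longrightarrow> y \<in> carrier A \<Longrightarrow> triangle x y z \<longleftrightarrow> le A z (comp A x y)"
  unfolding triangle_def by (simp add: meet_atom_neq_bot_iff comp_closed)

lemma triangle_ident_right: "atom A x \<Longrightarrow> atom A z \<Longrightarrow> triangle x (ident A) z \<longleftrightarrow> x = z"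
proof -
  assume x: "atom A x" and z: "atom A z"
  then have "triangle x (ident A) z \<longleftrightarrow> le A z x"
    by (simp add: triangle_atom_iff atom_carrier ident_closed comp_ident)
  then show ?thesis
    using atoms_le_eq[OF z x] le_refl[OF atom_carrier[OF z]] by auto
qed

end

locale sym_rel_alg = rel_alg +
  assumes symmetric: "symmetric A"
begin

lemma conv_eq: "x \<in> carrier A \<Longrightarrow> conv A x = x"
  using symmetric unfolding symmetric_def by simp

lemma comp_commute: "x \<in> carrier A \<Longrightarrow> y \<in> carrier A \<Longrightarrow> comp A x y = comp A y x"
  by (metis conv_comp conv_eq comp_closed)

lemma comp_mono_right: "x \<in> carrier A \<Longrightarrow> y \<in> carrier A \<Longrightarrow> z \<in> carrier A \<Longrightarrow>
    le A x y \<Longrightarrow> le A (comp A z x) (comp A z y)"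
  using comp_mono_left[of x y z] comp_commute by simp

lemma triangle_swap12: "x \<in> carrier A \<Longrightarrow> y \<in> carrier A \<Longrightarrow> triangle x y z \<Longrightarrow> triangle y x z"
  unfolding triangle_def by (simp add: comp_commute)

lemma triangle_swap23:
  assumes x: "x \<in> carrier A" and y: "y \<in> carrier A" and z: "z \<in> carrier A"
    and xyz: "triangle x y z"
  shows "triangle x z y"
proof (rule ccontr)
  have xz: "comp A x z \<in> carrier A" and xy: "comp A x y \<in> carrier A"
    using x y z comp_closed by auto
  assume "\<not> triangle x z y"
  then have "le A y (compl A (comp A x z))"
    by (simp add: triangle_def le_compl_iff_disjoint y xz meet_commute)
  then have "le A (comp A x y) (comp A x (compl A (comp A x z)))"
    by (simp add: comp_mono_right x y xz compl_closed)
  moreover have "le A (comp A x (compl A (comp A x z))) (compl A z)"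
    using schroeder[OF x z] by (simp add: le_def conv_eq x)
  ultimately have "le A (comp A x y) (compl A z)"
    using le_trans[OF xy _ compl_closed[OF z]] comp_closed[OF x compl_closed[OF xz]] by blast
  then show False
    using xyz by (simp add: triangle_def le_compl_iff_disjoint xy z)
qed

lemma triangle_mono:
  assumes x: "x \<in> carrier A" and y: "y \<in> carrier A" and z: "z \<in> carrier A"
    and a: "a \<in> carrier A" and b: "b \<in> carrier A"
    and "le A x a" "le A y b" and xyz: "triangle x y z"
  shows "triangle a b z"
proof -
  have xy: "comp A x y \<in> carrier A" and ab: "comp A a b \<in> carrier A"
    using x y a b comp_closed by auto
  have "le A (comp A x y) (comp A a y)" "le A (comp A a y) (comp A a b)"
    using assms by (simp_all add: comp_mono_left comp_mono_right)
  then have "le A (comp A x y) (comp A a b)"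
    using le_trans[OF xy comp_closed[OF a y] ab] by blast
  then have "le A (meet A (comp A x y) z) (meet A (comp A a b) z)"
    using le_meetI[OF ab z meet_closed[OF xy z]] meet_le2[OF xy z]
      le_trans[OF meet_closed[OF xy z] xy ab] meet_le1[OF xy z] by blast
  then show ?thesis
    using xyz le_bot_iff[OF meet_closed[OF xy z]] unfolding triangle_def by auto
qed

lemma triangle_permute:
  assumes x: "x \<in> carrier A" and y: "y \<in> carrier A" and z: "z \<in> carrier A"
    and xyz: "triangle x y z"
  shows "triangle y x z" "triangle x z y" "triangle z x y" "triangle y z x" "triangle z y x"
proof -
  show yxz: "triangle y x z" using triangle_swap12[OF x y xyz] .
  show xzy: "triangle x z y" using triangle_swap23[OF x y z xyz] .
  show zxy: "triangle z x y" using triangle_swap12[OF x z xzy] .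
  show "triangle y z x" using triangle_swap23[OF y x z yxz] .
  show "triangle z y x" using triangle_swap23[OF z x y zxy] .
qed

end

locale fin_sym_int_rel_alg = sym_rel_alg +
  assumes finite: "finite (carrier A)" and integral: "integral A"
begin

lemma exists_atom_below: "x \<in> carrier A \<Longrightarrow> x \<noteq> bot A \<Longrightarrow> \<exists>t. atom A t \<and> le A t x"
proof (induction "card {y \<in> carrier A. le A y x}" arbitrary: x rule: less_induct)
  case less
  show ?case
  proof (cases "atom A x")
    case True
    then show ?thesis using le_refl less.prems(1) by blast
  next
    case False
    then obtain y where y: "y \<in> carrier A" "le A y x" "y \<noteq> bot A" "y \<noteq> x"
      using less.prems unfolding atom_def by blast
    have "{z \<in> carrier A. le A z y} \<subset> {z \<in> carrier A. le A z x}"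
      using y less.prems(1) le_trans le_refl le_antisym by blast
    then have "card {z \<in> carrier A. le A z y} < card {z \<in> carrier A. le A z x}"
      using finite by (simp add: psubset_card_mono)
    then obtain t where t: "atom A t" "le A t y"
      using less.hyps y(1,3) by blast
    then show ?thesis
      using le_trans[OF atom_carrier[OF t(1)] y(1) less.prems(1)] y(2) by blast
  qed
qed

lemma le_iff_atoms_below:
  assumes a: "a \<in> carrier A" and b: "b \<in> carrier A"
  shows "le A a b \<longleftrightarrow> (\<forall>t. atom A t \<longrightarrow> le A t a \<longrightarrow> le A t b)"
proof
  show "le A a b \<Longrightarrow> \<forall>t. atom A t \<longrightarrow> le A t a \<longrightarrow> le A t b"
    using le_trans[OF atom_carrier a b] by blast
next
  assume below: "\<forall>t. atom A t \<longrightarrow> le A t a \<longrightarrow> le A t b"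
  show "le A a b"
  proof (rule le_of_meet_compl_eq_bot[OF a b], rule ccontr)
    assume "meet A a (compl A b) \<noteq> bot A"
    then obtain t where t: "atom A t" "le A t (meet A a (compl A b))"
      using exists_atom_below meet_closed[OF a compl_closed[OF b]] by blast
    then have "le A t a" "\<not> le A t b"
      using atom_le_meet_iff[OF t(1) a compl_closed[OF b]] atom_le_compl_iff[OF t(1) b] by auto
    then show False
      using below t(1) by blast
  qed
qed

lemma triangle_atom_below:
  assumes x: "x \<in> carrier A" and y: "y \<in> carrier A" and a: "a \<in> carrier A"
    and xya: "triangle x y a"
  shows "\<exists>t. atom A t \<and> le A t a \<and> triangle x y t"
proof -
  obtain t where t: "atom A t" "le A t (meet A (comp A x y) a)"
    using exists_atom_below[OF meet_closed[OF comp_closed[OF x y] a]] xya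
    unfolding triangle_def by blast
  then show ?thesis
    using atom_le_meet_iff[OF t(1) comp_closed[OF x y] a] triangle_atom_iff[OF t(1) x y]
    by blast
qed

lemma ident_atom: "atom A (ident A)"
  using integral unfolding integral_def .

lemma atom_cases: "atom A t \<Longrightarrow> t = ident A \<or> div_atom A t"
  unfolding div_atom_def
  using atom_le_compl_iff[OF _ ident_closed] atoms_le_eq[OF _ ident_atom] by blast

lemma div_atom_not_le_ident: "div_atom A x \<Longrightarrow> \<not> le A x (ident A)"
  unfolding div_atom_def using atom_le_compl_iff[OF _ ident_closed] by blast

lemma ident_not_div_atom: "\<not> div_atom A (ident A)"
  using div_atom_not_le_ident le_refl[OF ident_closed] by blast

definition proj :: "('a \<times> nat) option \<Rightarrow> 'a" where
  "proj w = (case w of None \<Rightarrow> ident A | Some (x, _) \<Rightarrow> x)"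

definition lift :: "'a \<Rightarrow> nat \<Rightarrow> ('a \<times> nat) option" where
  "lift t k = (if t = ident A then None else Some (t, k))"

lemma proj_lift: "proj (lift t k) = t"
  by (simp add: proj_def lift_def)

lemma lift_in_At: "atom A t \<Longrightarrow> lift t k \<in> At A"
  using atom_cases by (auto simp: lift_def At_def)

lemma atom_proj: "w \<in> At A \<Longrightarrow> atom A (proj w)"
  by (auto simp: At_def proj_def ident_atom div_atom_def)

lemma At_eq_lift: "w \<in> At A \<Longrightarrow> \<exists>k. w = lift (proj w) k"
  using ident_not_div_atom by (auto simp: At_def proj_def lift_def)

lemma mem_J_iff: "w \<in> J A a 0 \<longleftrightarrow> w \<in> At A \<and> le A (proj w) a"
  by (cases w) (auto simp: J_def At_def proj_def)

lemma base_triple_triangle: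
  assumes "v \<in> At A" "base_triple E A u v w"
  shows "triangle (proj u) (proj v) (proj w)"
  using assms
proof (cases "(E, A, u, v, w)" rule: base_triple.cases)
  case 1
  then have "u = None" "v = None" "w = None" by simp_all
  then show ?thesis
    using triangle_ident_right[OF ident_atom ident_atom] by (simp add: proj_def)
next
  case (2 _ _ p q)
  then obtain x i where uvw: "u = None" "v = Some (x, i)" "w = Some (x, i)"
    using assms(2) by (cases p) auto
  then have "atom A x"
    using atom_proj[OF assms(1)] by (simp add: proj_def)
  then show ?thesis
    using uvw triangle_swap12[OF atom_carrier ident_closed] triangle_ident_right
    by (simp add: proj_def)
next
  case (3 _ _ x i y j z k)
  then have "u = Some (x, i)" "v = Some (y, j)" "w = Some (z, k)"
    and "atom A z" "x \<in> carrier A" "y \<in> carrier A" "le A z (comp A x y)"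
    using assms(2) by (auto simp: div_atom_def atom_def)
  then show ?thesis
    by (simp add: proj_def triangle_atom_iff)
qed auto

lemma Ctr_triangle:
  assumes uvw: "Ctr E A u v w"
  shows "triangle (proj u) (proj v) (proj w)"
proof -
  have At: "u \<in> At A" "v \<in> At A" "w \<in> At A"
    using uvw unfolding Ctr_def by auto
  note c = At[THEN atom_proj, THEN atom_carrier]
  show ?thesis
    using uvw At base_triple_triangle[of _ E]
      triangle_permute[OF c(1,2,3)] triangle_permute[OF c(1,3,2)] triangle_permute[OF c(2,1,3)]
      triangle_permute[OF c(2,3,1)] triangle_permute[OF c(3,1,2)] triangle_permute[OF c(3,2,1)]
    unfolding Ctr_def by blast
qed

lemma base_triple_ident_lift: "base_triple E A None (lift t k) (lift t k)"
  by (simp add: lift_def)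

lemma Ctr_lift:
  assumes x: "atom A x" and y: "atom A y" and z: "atom A z" and xyz: "triangle x y z"
  shows "Ctr E A (lift x k) (lift y k) (lift z k)"
proof -
  have carr: "x \<in> carrier A" "y \<in> carrier A" "z \<in> carrier A"
    using x y z atom_carrier by auto
  consider "x = ident A" | "y = ident A" | "z = ident A"
    | "div_atom A x" "div_atom A y" "div_atom A z"
    using atom_cases x y z by blast
  then have "base_triple E A (lift x k) (lift y k) (lift z k) \<or>
      base_triple E A (lift y k) (lift x k) (lift z k) \<or>
      base_triple E A (lift z k) (lift x k) (lift y k)"
  proof cases
    case 1
    then have "y = z"
      using triangle_swap12[OF carr(1,2) xyz] triangle_ident_right[OF y z] by simp
    then show ?thesis using 1 base_triple_ident_lift by (simp add: lift_def)
  next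
    case 2
    then have "x = z" using xyz triangle_ident_right[OF x z] by simp
    then show ?thesis using 2 base_triple_ident_lift by (simp add: lift_def)
  next
    case 3
    then have "x = y"
      using triangle_swap23[OF carr xyz] triangle_ident_right[OF x y] by simp
    then show ?thesis using 3 base_triple_ident_lift by (simp add: lift_def)
  next
    case 4
    then show ?thesis
      using xyz ident_not_div_atom triangle_atom_iff[OF z carr(1,2)] by (auto simp: lift_def T_def)
  qed
  then show ?thesis
    unfolding Ctr_def using lift_in_At x y z by blast
qed

lemma J_comp:
  assumes a: "a \<in> carrier A" and b: "b \<in> carrier A"
  shows "J A (comp A a b) 0 = {w. \<exists>u\<in>J A a 0. \<exists>v\<in>J A b 0. Ctr E A u v w}"
proof (intro set_eqI iffI)
  fix w assume "w \<in> {w. \<exists>u\<in>J A a 0. \<exists>v\<in>J A b 0. Ctr E A u v w}"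
  then obtain u v where u: "u \<in> J A a 0" and v: "v \<in> J A b 0" and uvw: "Ctr E A u v w"
    by blast
  have "u \<in> At A" "v \<in> At A" and w: "w \<in> At A"
    using uvw unfolding Ctr_def by auto
  then have "triangle a b (proj w)"
    using triangle_mono[OF atom_carrier[OF atom_proj] atom_carrier[OF atom_proj]
        atom_carrier[OF atom_proj] a b] Ctr_triangle[OF uvw] u v
    by (simp add: mem_J_iff)
  then show "w \<in> J A (comp A a b) 0"
    using triangle_atom_iff[OF atom_proj[OF w] a b] w by (simp add: mem_J_iff)
next
  fix w assume "w \<in> J A (comp A a b) 0"
  then have w: "w \<in> At A" and "le A (proj w) (comp A a b)"
    by (auto simp: mem_J_iff)
  define z where "z = proj w"
  have z: "atom A z" and zc: "z \<in> carrier A"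
    using atom_proj[OF w] atom_carrier unfolding z_def by auto
  have "triangle z b a"
    using triangle_atom_iff[OF z a b] triangle_permute(5)[OF a b zc] \<open>le A (proj w) _\<close> z_def
    by simp
  then obtain x where x: "atom A x" "le A x a" "triangle z b x"
    using triangle_atom_below[OF zc b a] by blast
  have xc: "x \<in> carrier A"
    using atom_carrier[OF x(1)] .
  obtain y where y: "atom A y" "le A y b" "triangle z x y"
    using triangle_atom_below[OF zc xc b] triangle_swap23[OF zc b xc x(3)] by blast
  have "triangle x y z"
    using triangle_permute(4)[OF zc xc atom_carrier[OF y(1)] y(3)] .
  moreover obtain k where "w = lift z k"
    using At_eq_lift[OF w] z_def by blast
  ultimately show "w \<in> {w. \<exists>u\<in>J A a 0. \<exists>v\<in>J A b 0. Ctr E A u v w}"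
    using Ctr_lift[OF x(1) y(1) z] x y lift_in_At by (fastforce simp: mem_J_iff proj_lift)
qed

lemma J_ra_hom: "ra_hom (\<lambda>a. J A a 0) A (CEA E A)"
  unfolding ra_hom_def
proof (intro conjI ballI)
  show "(\<lambda>a. J A a 0) ` carrier A \<subseteq> carrier (CEA E A)"
    by (auto simp: CEA_def mem_J_iff)
  show "J A (bot A) 0 = bot (CEA E A)"
    using atom_not_le_bot atom_proj by (auto simp: CEA_def mem_J_iff)
  show "J A (top A) 0 = top (CEA E A)"
    using top_greatest atom_proj atom_carrier by (auto simp: CEA_def mem_J_iff)
  show "J A (ident A) 0 = ident (CEA E A)"
    using div_atom_not_le_ident
    by (auto simp: CEA_def mem_J_iff At_def proj_def le_refl ident_closed)
  fix x assume x: "x \<in> carrier A"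
  show "J A (compl A x) 0 = compl (CEA E A) (J A x 0)"
    using atom_le_compl_iff[OF atom_proj x] by (auto simp: CEA_def mem_J_iff)
  show "J A (conv A x) 0 = conv (CEA E A) (J A x 0)"
    by (simp add: CEA_def conv_eq x)
  fix y assume y: "y \<in> carrier A"
  show "J A (join A x y) 0 = join (CEA E A) (J A x 0) (J A y 0)"
    using atom_le_join_iff[OF atom_proj x y] by (auto simp: CEA_def mem_J_iff)
  show "J A (meet A x y) 0 = meet (CEA E A) (J A x 0) (J A y 0)"
    using atom_le_meet_iff[OF atom_proj x y] by (auto simp: CEA_def mem_J_iff)
  show "J A (comp A x y) 0 = comp (CEA E A) (J A x 0) (J A y 0)"
    by (simp add: CEA_def J_comp x y)
qed

lemma J_inj: "inj_on (\<lambda>a. J A a 0) (carrier A)"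
proof (rule inj_onI)
  fix a b assume a: "a \<in> carrier A" and b: "b \<in> carrier A" and ab: "J A a 0 = J A b 0"
  have "le A t a \<longleftrightarrow> le A t b" if "atom A t" for t
  proof -
    have "le A t c \<longleftrightarrow> lift t 0 \<in> J A c 0" for c
      by (simp add: mem_J_iff proj_lift lift_in_At[OF that])
    then show ?thesis using ab by simp
  qed
  then have "\<forall>t. atom A t \<longrightarrow> le A t a \<longrightarrow> le A t b"
    "\<forall>t. atom A t \<longrightarrow> le A t b \<longrightarrow> le A t a"
    by blast+
  then have "le A a b" "le A b a"
    by (simp_all only: le_iff_atoms_below[OF a b] le_iff_atoms_below[OF b a])
  then show "a = b"
    using le_antisym[OF a b] by blast
qed

end

lemma ra_iso_onto_image:
  assumes A: "is_ra A" and f: "ra_hom f A B" and inj: "inj_on f (carrier A)"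
  defines "B' \<equiv> B\<lparr>carrier := f ` carrier A\<rparr>"
  shows "subalg B' B \<and> ra_iso f A B'"
proof -
  interpret rel_alg A using A by unfold_locales
  have nullary: "bot B = f (bot A)" "top B = f (top A)" "ident B = f (ident A)"
    using f unfolding ra_hom_def by simp_all
  have unary: "compl B (f x) = f (compl A x)" "conv B (f x) = f (conv A x)"
    if "x \<in> carrier A" for x
    using f that unfolding ra_hom_def by simp_all
  have binary: "join B (f x) (f y) = f (join A x y)" "meet B (f x) (f y) = f (meet A x y)"
    "comp B (f x) (f y) = f (comp A x y)" if "x \<in> carrier A" "y \<in> carrier A" for x y
    using f that unfolding ra_hom_def by simp_all
  have "f ` carrier A \<subseteq> carrier B"
    using f unfolding ra_hom_def by simp
  then have "subalg B' B"
    unfolding subalg_def B'_def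
    by (simp add: ball_simps nullary unary binary bot_closed top_closed ident_closed compl_closed
        conv_closed join_closed meet_closed comp_closed)
  moreover have "ra_iso f A B'"
    using f inj unfolding ra_iso_def ra_hom_def bij_betw_def B'_def by simp
  ultimately show ?thesis ..
qed

theorem lemma2:
  fixes E A :: "'a ra"
  assumes "is_ra A" and "finite (carrier A)" and "symmetric A" and "integral A"
    and "is_ra E" and "finite (carrier E)" and "symmetric E" and "integral E"
    and "subalg E A"
  shows "\<exists>A'. subalg A' (CEA E A) \<and> ra_iso (\<lambda>a. J A a 0) A A'"
proof -
  interpret fin_sym_int_rel_alg A
    using assms(1-4) by unfold_locales
  let ?A' = "(CEA E A)\<lparr>carrier := (\<lambda>a. J A a 0) ` carrier A\<rparr>"
  have "subalg ?A' (CEA E A) \<and> ra_iso (\<lambda>a. J A a 0) A ?A'"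
    by (rule ra_iso_onto_image[OF assms(1) J_ra_hom J_inj])
  then show ?thesis ..
qed

end
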